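(* Let $K$ and $K'$ be two CMIs. Then $\mathrm{can}(\mathrm{pur}(K))=\mathrm{can}(\mathrm{pur}(K'))$ if and only if $K'$ is a sub-CMI of $K$ and $K$ is a sub-CMI of $K'$.
   Context: Setting: $X_1,\dots,X_n$ jointly distributed discrete random variables with $H(X_i)<\infty$; distribution unspecified. $X_\alpha=(X_i,i\in\alpha)$, $X_\emptyset$ constant. A CMI is $K=(C,\langle Q_1,\dots,Q_k\rangle)$, $k\ge0$, $C\subseteq\{1,\dots,n\}$, $\langle\cdot\rangle$ an unordered multiset of subsets; valid (for a given distribution) if $\sum_iH(X_{Q_i}|X_C)-H(X_{Q_1},\dots,X_{Q_k}|X_C)=0$. Empty members may be deleted; equality of CMIs means equal conditioning sets and equal multisets. Degenerate = valid for every distribution; all degenerate CMIs are identified and written $(\cdot,\langle\ \rangle)$. $\mathrm{pur}(K)=(C,\langle Q_i\setminus C:Q_i\setminus C\ne\emptyset\rangle)$. For pure $K$: $\mathbb I_K$ = indices lying in at least two members of the collection if $k\ge2$, else $\emptyset$; $P_1,\dots,P_t$ the nonempty sets among $Q_i\setminus\mathbb I_K$; $\mathrm{can}(K)=(\cdot,\langle\ \rangle)$ if $k\le1$, $(C,\langle\mathbb I_K,\mathbb I_K\rangle)$ if $k\ge2,\mathbb I_K\ne\emptyset,t\le1$, $(C,\langle P_1..P_t\rangle)$ if $k\ge2,\mathbb I_K=\emptyset$, $(C,\langle\mathbb I_K,\mathbb I_K,P_1..P_t\rangle)$ if $k\ge2,\mathbb I_K\ne\emptyset,t\ge2$. For general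 $K$, $\mathbb I_K$ is the repeated-index set of $\mathrm{pur}(K)$ and $\mathrm{can}(\mathrm{pur}(K))$ is written $(C,\langle\mathbb I_K,\mathbb I_K,P_i,1\le i\le t\rangle)$ (copies of $\mathbb I_K$ omitted if empty; degenerate $K$ has $\mathbb I_K=\emptyset$, $t\in\{0,1\}$). $P=\bigcup_iP_i$, $S=C\cup P$. $R_K^{K'}$: with $\mathrm{can}(\mathrm{pur}(K'))=(C',\langle\mathbb I_{K'},\mathbb I_{K'},P'_j,1\le j\le s\rangle)$, $D=\mathbb I_{K'}\setminus\mathbb I_K$ and $T_1,\dots,T_u$ the nonempty sets among $P'_j\setminus\mathbb I_K$: $R_K^{K'}=(\cdot,\langle\ \rangle)$ if $D=\emptyset,u\le1$; $(C'\setminus\mathbb I_K,\langle T_1..T_u\rangle)$ if $D=\emptyset,u\ge2$; $(C'\setminus\mathbb I_K,\langle D,D\rangle)$ if $D\ne\emptyset,u\le1$; $(C'\setminus\mathbb I_K,\langle D,D,T_1..T_u\rangle)$ if $D\ne\emptyset,u\ge2$. Sub-CMI: with $K''=R_K^{K'}$, $\mathrm{can}(\mathrm{pur}(K''))=(C'',\langle\mathbb I_{K''},\mathbb I_{K''},P''_j,1\le j\le r\rangle)$, $P''=\bigcup_jP''_j$, $K'$ is a sub-CMI of $K$ if: (i) $K'=(\cdot,\langle\ \rangle)$; or (ii) $\mathrm{can}(\mathrm{pur}(K''))=(\cdot,\langle\ \rangle)$ and $C\subseteq C'$; or (iii) $\mathrm{can}(\mathrm{pur}(K''))\ne(\cdot,\langle\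 \rangle)$, $\mathbb I_{K''}=\emptyset$, $P''\subseteq P$, $C\subseteq C''\subseteq S\setminus P''$, and whenever $m_1\in P''_{j_1}$, $m_2\in P''_{j_2}$ with $j_1\ne j_2$, then $m_1\in P_{i_1}$, $m_2\in P_{i_2}$ with $i_1\ne i_2$. *)

theory Defs
  imports Main "HOL-Library.Multiset"
begin

text \<open>A CMI is either the (identified) degenerate CMI, or a pair (C, multiset of members).
  Indices are natural numbers (random variables X_1..X_n).\<close>
datatype cmi = Deg | CMI "nat set" "nat set multiset"

definition cmi_wf :: "nat \<Rightarrow> cmi \<Rightarrow> bool" where
  "cmi_wf n K = (case K of Deg \<Rightarrow> True
     | CMI C Qs \<Rightarrow> C \<subseteq> {1..n} \<and> (\<forall>Q\<in>#Qs. Q \<subseteq> {1..n}))"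

fun pur :: "cmi \<Rightarrow> cmi" where
  "pur Deg = Deg"
| "pur (CMI C Qs) = CMI C (filter_mset (\<lambda>Q. Q \<noteq> {}) (image_mset (\<lambda>Q. Q - C) Qs))"

fun cond :: "cmi \<Rightarrow> nat set" where
  "cond Deg = {}"
| "cond (CMI C Qs) = C"

fun mems :: "cmi \<Rightarrow> nat set multiset" where
  "mems Deg = {#}"
| "mems (CMI C Qs) = Qs"

definition rep_idx :: "nat set multiset \<Rightarrow> nat set" where
  "rep_idx Qs = (if size Qs \<ge> 2
     then {i. size (filter_mset (\<lambda>Q. i \<in> Q) Qs) \<ge> 2} else {})"

definition strip :: "nat set \<Rightarrow> nat set multiset \<Rightarrow> nat set multiset" where
  "strip I Qs = filter_mset (\<lambda>Q. Q \<noteq> {}) (image_mset (\<lambda>Q. Q - I) Qs)"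

fun can :: "cmi \<Rightarrow> cmi" where
  "can Deg = Deg"
| "can (CMI C Qs) =
     (if size Qs \<le> 1 then Deg
      else (let I = rep_idx Qs; Ps = strip I Qs in
            if I \<noteq> {} \<and> size Ps \<le> 1 then CMI C {#I, I#}
            else if I = {} then CMI C Ps
            else CMI C ({#I, I#} + Ps)))"

text \<open>Degenerate CMIs (valid for every distribution): those whose purification has at
  most one member; they are all identified with Deg.\<close>
definition degenerate :: "cmi \<Rightarrow> bool" where
  "degenerate K \<longleftrightarrow> size (mems (pur K)) \<le> 1"

definition II :: "cmi \<Rightarrow> nat set" where
  "II K = rep_idx (mems (pur K))"

text \<open>The sets P_1..P_t in the written form can(pur K) = (C,<I_K,I_K,P_i>).
  For degenerate K: I_K = {} and the P_i are the (at most one) nonempty members of pur(K).\<close>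
definition PPs :: "cmi \<Rightarrow> nat set multiset" where
  "PPs K = (if degenerate K then mems (pur K)
            else (let Ps = strip (II K) (mems (pur K)) in
                  if II K \<noteq> {} \<and> size Ps \<le> 1 then {#} else Ps))"

definition PP :: "cmi \<Rightarrow> nat set" where
  "PP K = \<Union> (set_mset (PPs K))"

definition SS :: "cmi \<Rightarrow> nat set" where
  "SS K = cond K \<union> PP K"

definition RR :: "cmi \<Rightarrow> cmi \<Rightarrow> cmi" where
  "RR K K' = (let D = II K' - II K; Ts = strip (II K) (PPs K'); C0 = cond K' - II K in
     if D = {} \<and> size Ts \<le> 1 then Deg
     else if D = {} then CMI C0 Ts
     else if size Ts \<le> 1 then CMI C0 {#D, D#}
     else CMI C0 ({#D, D#} + Ts))"

definition sub_cmi :: "cmi \<Rightarrow> cmi \<Rightarrow> bool" where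
  "sub_cmi K' K \<longleftrightarrow>
     (let K'' = RR K K' in
      degenerate K'
      \<or> (can (pur K'') = Deg \<and> cond K \<subseteq> cond K')
      \<or> (can (pur K'') \<noteq> Deg \<and> II K'' = {} \<and> PP K'' \<subseteq> PP K
         \<and> cond K \<subseteq> cond K'' \<and> cond K'' \<subseteq> SS K - PP K''
         \<and> (\<forall>A B m1 m2. {#A, B#} \<subseteq># PPs K'' \<and> m1 \<in> A \<and> m2 \<in> B \<longrightarrow>
              (\<exists>A' B'. {#A', B'#} \<subseteq># PPs K \<and> m1 \<in> A' \<and> m2 \<in> B'))))"

end

theory Submission
  imports Defs
begin

text \<open>
  For a nondegenerate CMI \<open>K\<close>, \<open>can(pur(K)) = (C, \<langle>I\<^sub>K, I\<^sub>K, P\<^sub>1, \<dots>, P\<^sub>t\<rangle>)\<close> where the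
  \<open>P\<^sub>i\<close> are nonempty, pairwise disjoint and disjoint from \<open>C\<close> and \<open>I\<^sub>K\<close>. Hence \<open>I\<^sub>K\<close> is
  recovered as the repeated-index set of this collection, and \<open>can(pur(K))\<close> determines and
  is determined by \<open>C\<close>, \<open>I\<^sub>K\<close> and the family of the \<open>P\<^sub>i\<close>.

  Unfolding \<open>R\<^sub>K\<^sup>K\<^sup>'\<close>, a nondegenerate \<open>K'\<close> is a sub-CMI of \<open>K\<close> iff \<open>I\<^sub>K\<^sub>' \<subseteq> I\<^sub>K\<close>,
  \<open>C \<subseteq> C'\<close>, any two points lying in different sets \<open>T\<^sub>j = P'\<^sub>j - I\<^sub>K\<close> lie in different
  \<open>P\<^sub>i\<close>, and (when there are at least two \<open>T\<^sub>j\<close>) two containment conditions hold. So mutual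
  sub-CMIs have the same \<open>C\<close> and \<open>I\<close>, and their \<open>P\<close>-families are partitions of the same
  ground set that separate the same pairs of points; such partitions coincide, the block
  through \<open>x\<close> being the set of points not separated from \<open>x\<close>. A degenerate CMI separates
  no pair of points, so it has no nondegenerate sub-CMI.
\<close>

section \<open>Multisets of sets\<close>

definition occurrences :: "'a \<Rightarrow> 'a set multiset \<Rightarrow> nat" where
  "occurrences x M = size (filter_mset (\<lambda>A. x \<in> A) M)"

definition separations :: "'a set multiset \<Rightarrow> ('a \<times> 'a) set" where
  "separations M = {(x, y). \<exists>A B. {#A, B#} \<subseteq># M \<and> x \<in> A \<and> y \<in> B}"

definition disjoint_members :: "'a set multiset \<Rightarrow> bool" where
  "disjoint_members M \<longleftrightarrow> (\<forall>x. occurrences x M \<le> 1)"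

lemma separationsI: "{#A, B#} \<subseteq># M \<Longrightarrow> x \<in> A \<Longrightarrow> y \<in> B \<Longrightarrow> (x, y) \<in> separations M"
  unfolding separations_def by blast

lemma separationsE:
  assumes "(x, y) \<in> separations M"
  obtains A B where "{#A, B#} \<subseteq># M" "x \<in> A" "y \<in> B"
  using assms unfolding separations_def by blast

lemma add_mset_pair_subseteq:
  assumes "a \<noteq> b" "a \<in># M" "b \<in># M"
  shows "{#a, b#} \<subseteq># M"
  using assms by (metis insert_DiffM insert_noteq_member insert_subset_eq_iff single_subset_iff)

lemma obtain_pair_subseteq:
  assumes "2 \<le> size M"
  obtains a b where "{#a, b#} \<subseteq># M"
proof -
  from assms obtain a where a: "a \<in># M"
    by fastforce
  with assms have "size (M - {#a#}) \<noteq> 0"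
    by (simp add: size_Diff_singleton)
  then have "M - {#a#} \<noteq> {#}"
    by auto
  then obtain b where "b \<in># M - {#a#}"
    by blast
  then have "{#a, b#} \<subseteq># add_mset a (M - {#a#})"
    by simp
  with a show thesis
    using that by (simp add: insert_DiffM)
qed

lemma two_le_occurrences_iff: "2 \<le> occurrences x M \<longleftrightarrow> (x, x) \<in> separations M"
proof
  assume "2 \<le> occurrences x M"
  then obtain A B where AB: "{#A, B#} \<subseteq># filter_mset (\<lambda>A. x \<in> A) M"
    unfolding occurrences_def by (rule obtain_pair_subseteq)
  then have "{#A, B#} \<subseteq># M"
    using multiset_filter_subset subset_mset.order_trans by blast
  moreover have "x \<in> A" "x \<in> B"
    using mset_subset_eqD[OF AB] by auto
  ultimately show "(x, x) \<in> separations M"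
    by (rule separationsI)
next
  assume "(x, x) \<in> separations M"
  then obtain A B where AB: "{#A, B#} \<subseteq># M" "x \<in> A" "x \<in> B"
    by (rule separationsE)
  have "filter_mset (\<lambda>A. x \<in> A) {#A, B#} \<subseteq># filter_mset (\<lambda>A. x \<in> A) M"
    using AB(1) by (rule multiset_filter_mono)
  from size_mset_mono[OF this] show "2 \<le> occurrences x M"
    using AB(2,3) by (simp add: occurrences_def)
qed

lemma separations_subset_iff:
  "separations P \<subseteq> separations Q \<longleftrightarrow>
    (\<forall>A B x y. {#A, B#} \<subseteq># P \<and> x \<in> A \<and> y \<in> B \<longrightarrow>
      (\<exists>A' B'. {#A', B'#} \<subseteq># Q \<and> x \<in> A' \<and> y \<in> B'))"
  unfolding separations_def by blast

lemma separations_eq_empty: "size M \<le> 1 \<Longrightarrow> separations M = {}"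
  unfolding separations_def by (auto dest: size_mset_mono)

lemma separations_ne_empty:
  assumes "2 \<le> size M" "\<forall>A\<in>#M. A \<noteq> {}"
  shows "separations M \<noteq> {}"
proof -
  obtain A B where AB: "{#A, B#} \<subseteq># M"
    using assms(1) by (rule obtain_pair_subseteq)
  then have "A \<noteq> {}" "B \<noteq> {}"
    using assms(2) by (auto dest: mset_subset_eqD)
  then obtain x y where "x \<in> A" "y \<in> B"
    by blast
  with AB have "(x, y) \<in> separations M"
    by (rule separationsI)
  then show ?thesis
    by blast
qed

lemma disjoint_members_iff: "disjoint_members M \<longleftrightarrow> (\<forall>x. (x, x) \<notin> separations M)"
proof -
  have "occurrences x M \<le> 1 \<longleftrightarrow> \<not> 2 \<le> occurrences x M" for x
    by linarith
  then show ?thesis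
    unfolding disjoint_members_def two_le_occurrences_iff by simp
qed

lemma disjoint_membersD:
  assumes "disjoint_members M" "A \<in># M" "B \<in># M" "x \<in> A" "x \<in> B"
  shows "A = B"
proof (rule ccontr)
  assume "A \<noteq> B"
  with assms(2,3) have "{#A, B#} \<subseteq># M"
    by (intro add_mset_pair_subseteq)
  with assms(1,4,5) show False
    unfolding disjoint_members_iff by (metis separationsI)
qed

lemma disjoint_members_count:
  assumes "disjoint_members M" "A \<noteq> {}"
  shows "count M A \<le> 1"
proof (rule ccontr)
  assume "\<not> count M A \<le> 1"
  then have "{#A, A#} \<subseteq># M"
    by (simp add: subseteq_mset_def)
  with assms show False
    unfolding disjoint_members_iff by (metis ex_in_conv separationsI)
qed

lemma disjoint_member_eq_block:
  assumes M: "disjoint_members M" and A: "A \<in># M" "x \<in> A"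
  shows "A = {y \<in> \<Union> (set_mset M). (x, y) \<notin> separations M}"
proof (intro set_eqI iffI)
  fix y assume y: "y \<in> A"
  have "(x, y) \<notin> separations M"
  proof
    assume "(x, y) \<in> separations M"
    then obtain B C where BC: "{#B, C#} \<subseteq># M" "x \<in> B" "y \<in> C"
      by (rule separationsE)
    then have "B \<in># M" "C \<in># M"
      by (auto dest: mset_subset_eqD)
    then have "B = A" "C = A"
      using disjoint_membersD[OF M] A y BC(2,3) by metis+
    with BC M show False
      unfolding disjoint_members_iff by (metis separationsI)
  qed
  then show "y \<in> {y \<in> \<Union> (set_mset M). (x, y) \<notin> separations M}"
    using A(1) y by blast
next
  fix y assume "y \<in> {y \<in> \<Union> (set_mset M). (x, y) \<notin> separations M}"
  then obtain C where C: "C \<in># M" "y \<in> C" and nsep: "(x, y) \<notin> separations M"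
    by blast
  have "C = A"
  proof (rule ccontr)
    assume "C \<noteq> A"
    then have "{#A, C#} \<subseteq># M"
      using A(1) C(1) by (intro add_mset_pair_subseteq) auto
    with nsep A(2) C(2) show False
      by (metis separationsI)
  qed
  with C show "y \<in> A"
    by simp
qed

lemma disjoint_members_eqI:
  assumes P: "disjoint_members P" "\<forall>A\<in>#P. A \<noteq> {}"
    and Q: "disjoint_members Q" "\<forall>A\<in>#Q. A \<noteq> {}"
    and union: "\<Union> (set_mset P) = \<Union> (set_mset Q)"
    and sep: "separations P = separations Q"
  shows "P = Q"
proof -
  define block where "block x = {y \<in> \<Union> (set_mset P). (x, y) \<notin> separations P}" for x
  have members: "set_mset M = block ` \<Union> (set_mset M)"
    if M: "disjoint_members M" "\<forall>A\<in>#M. A \<noteq> {}"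
      and MP: "\<Union> (set_mset M) = \<Union> (set_mset P)" "separations M = separations P" for M
  proof -
    have A_eq: "A = block x" if "A \<in># M" "x \<in> A" for A x
      using disjoint_member_eq_block[OF M(1) that] MP unfolding block_def by simp
    show ?thesis
    proof (intro equalityI subsetI)
      fix A assume A: "A \<in> set_mset M"
      with M(2) obtain x where "x \<in> A"
        by blast
      with A show "A \<in> block ` \<Union> (set_mset M)"
        using A_eq by blast
    next
      fix A assume "A \<in> block ` \<Union> (set_mset M)"
      then obtain x B where "A = block x" "B \<in># M" "x \<in> B"
        by blast
      then show "A \<in> set_mset M"
        using A_eq by simp
    qed
  qed
  have set_eq: "set_mset P = set_mset Q"
    using members[OF P refl refl] members[OF Q union[symmetric] sep[symmetric]] union by simp
  show ?thesis
  proof (rule multiset_eqI)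
    fix A
    show "count P A = count Q A"
    proof (cases "A \<in># P")
      case True
      with P(2) set_eq have "A \<noteq> {}" "A \<in># Q"
        by auto
      then have "count P A \<le> 1" "count Q A \<le> 1"
        using disjoint_members_count P(1) Q(1) by blast+
      moreover have "0 < count P A" "0 < count Q A"
        using True \<open>A \<in># Q\<close> by simp_all
      ultimately show ?thesis
        by linarith
    next
      case False
      moreover from False set_eq have "A \<notin># Q"
        by simp
      ultimately show ?thesis
        by (simp add: not_in_iff)
    qed
  qed
qed

section \<open>Repeated indices and canonical forms\<close>

lemma occurrences_le_size: "occurrences x M \<le> size M"
  unfolding occurrences_def by (rule size_filter_mset_lesseq)

lemma rep_idx_eq: "rep_idx M = {x. 2 \<le> occurrences x M}"
proof -
  have "2 \<le> size M" if "2 \<le> occurrences x M" for x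
    using that occurrences_le_size[of x M] by linarith
  then show ?thesis
    unfolding rep_idx_def by (auto simp: occurrences_def)
qed

lemma rep_idx_eq_empty_iff: "rep_idx M = {} \<longleftrightarrow> disjoint_members M"
proof -
  have "occurrences x M \<le> 1 \<longleftrightarrow> \<not> 2 \<le> occurrences x M" for x
    by linarith
  then show ?thesis
    unfolding rep_idx_eq disjoint_members_def by auto
qed

lemma occurrences_strip: "occurrences x (strip I M) = (if x \<in> I then 0 else occurrences x M)"
proof -
  have "filter_mset (\<lambda>A. x \<in> A) (strip I M) = filter_mset (\<lambda>A. x \<in> A) (image_mset (\<lambda>A. A - I) M)"
    unfolding strip_def filter_filter_mset by (rule filter_mset_cong) auto
  also have "\<dots> = image_mset (\<lambda>A. A - I) (filter_mset (\<lambda>A. x \<in> A - I) M)"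
    by (rule filter_mset_image_mset)
  also have "filter_mset (\<lambda>A. x \<in> A - I) M = (if x \<in> I then {#} else filter_mset (\<lambda>A. x \<in> A) M)"
    by (auto intro: filter_mset_cong)
  finally show ?thesis
    unfolding occurrences_def by simp
qed

lemma disjoint_members_strip: "disjoint_members M \<Longrightarrow> disjoint_members (strip I M)"
  unfolding disjoint_members_def occurrences_strip by simp

lemma disjoint_members_strip_rep_idx: "disjoint_members (strip (rep_idx M) M)"
  unfolding disjoint_members_def occurrences_strip rep_idx_eq by simp

lemma strip_eq_self:
  assumes "\<forall>A\<in>#M. A \<noteq> {} \<and> A \<inter> I = {}"
  shows "strip I M = M"
proof -
  have "image_mset (\<lambda>A. A - I) M = image_mset id M"
    using assms by (intro image_mset_cong) (simp add: Diff_triv)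
  moreover have "filter_mset (\<lambda>A. A \<noteq> {}) M = M"
    using assms by (simp add: filter_mset_eq_conv)
  ultimately show ?thesis
    unfolding strip_def by simp
qed

lemma strip_memberE:
  assumes "A \<in># strip I M"
  obtains B where "B \<in># M" "A = B - I" "A \<noteq> {}"
  using assms unfolding strip_def by auto

definition doubled :: "'a set \<Rightarrow> 'a set multiset" where
  "doubled I = (if I = {} then {#} else {#I, I#})"

lemma rep_idx_doubled_plus:
  assumes "\<forall>A\<in>#P. A \<inter> I = {}" "disjoint_members P"
  shows "rep_idx (doubled I + P) = I"
proof -
  have "occurrences x P = 0" if "x \<in> I" for x
    using assms(1) that unfolding occurrences_def by (auto simp: filter_mset_eq_conv)
  then have "occurrences x (doubled I + P) = (if x \<in> I then 2 else occurrences x P)" for x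
    unfolding occurrences_def doubled_def by auto
  moreover have "\<not> 2 \<le> occurrences x P" for x
    using assms(2) unfolding rep_idx_eq_empty_iff[symmetric] rep_idx_eq by blast
  ultimately show ?thesis
    unfolding rep_idx_eq by auto
qed

lemma pur_CMI: "pur (CMI C Qs) = CMI C (strip C Qs)"
  by (simp add: strip_def)

lemma mems_pur_memberD: "A \<in># mems (pur K) \<Longrightarrow> A \<noteq> {} \<and> A \<inter> cond K = {}"
  by (cases K) auto

lemma II_Int_cond: "II K \<inter> cond K = {}"
proof -
  have "x \<notin> cond K" if "x \<in> II K" for x
  proof -
    from that have "(x, x) \<in> separations (mems (pur K))"
      unfolding II_def rep_idx_eq two_le_occurrences_iff by simp
    then obtain A B where "{#A, B#} \<subseteq># mems (pur K)" "x \<in> A"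
      by (rule separationsE)
    then have "A \<in># mems (pur K)" "x \<in> A"
      by (auto dest: mset_subset_eqD)
    then show ?thesis
      using mems_pur_memberD by blast
  qed
  then show ?thesis
    by blast
qed

lemma PPs_memberD: "A \<in># PPs K \<Longrightarrow> A \<noteq> {} \<and> A \<inter> cond K = {} \<and> A \<inter> II K = {}"
proof (cases "degenerate K")
  case True
  assume "A \<in># PPs K"
  with True show ?thesis
    using mems_pur_memberD by (simp add: PPs_def II_def degenerate_def rep_idx_def)
next
  case False
  assume "A \<in># PPs K"
  with False have "A \<in># strip (II K) (mems (pur K))"
    unfolding PPs_def Let_def by (auto split: if_splits)
  then obtain B where "B \<in># mems (pur K)" "A = B - II K" "A \<noteq> {}"
    by (rule strip_memberE)
  then show ?thesis
    using mems_pur_memberD by blast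
qed

lemma degenerate_II_PPs: "degenerate K \<Longrightarrow> II K = {} \<and> size (PPs K) \<le> 1"
  unfolding degenerate_def II_def PPs_def rep_idx_def by auto

lemma disjoint_members_PPs: "disjoint_members (PPs K)"
proof (cases "degenerate K")
  case True
  then have "occurrences x (PPs K) \<le> 1" for x
    using occurrences_le_size[of x "PPs K"] degenerate_II_PPs by fastforce
  then show ?thesis
    unfolding disjoint_members_def by blast
next
  case False
  then show ?thesis
    using disjoint_members_strip_rep_idx[of "mems (pur K)"]
    unfolding PPs_def II_def Let_def by (simp add: disjoint_members_def occurrences_def)
qed

lemma can_pur_eq_Deg_iff: "can (pur K) = Deg \<longleftrightarrow> degenerate K"
  by (cases K) (simp_all add: degenerate_def Let_def)

lemma two_le_size_PPs:
  assumes "\<not> degenerate K" "II K = {}"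
  shows "2 \<le> size (PPs K)"
proof -
  have "strip {} (mems (pur K)) = mems (pur K)"
    using mems_pur_memberD by (intro strip_eq_self) blast
  with assms show ?thesis
    unfolding PPs_def degenerate_def by simp
qed

lemma size_PPs_ne_1: "\<not> degenerate K \<Longrightarrow> size (PPs K) \<noteq> 1"
  using two_le_size_PPs[of K] unfolding PPs_def Let_def by (auto split: if_splits)

lemma can_pur_nondegenerate:
  "\<not> degenerate K \<Longrightarrow> can (pur K) = CMI (cond K) (doubled (II K) + PPs K)"
  by (cases K) (simp_all add: degenerate_def Let_def PPs_def II_def doubled_def)

lemma can_pur_eq_iff:
  assumes "\<not> degenerate K" "\<not> degenerate K'"
  shows "can (pur K) = can (pur K') \<longleftrightarrow> cond K = cond K' \<and> II K = II K' \<and> PPs K = PPs K'"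
proof
  assume "can (pur K) = can (pur K')"
  then have cond: "cond K = cond K'" and mems: "doubled (II K) + PPs K = doubled (II K') + PPs K'"
    using assms by (simp_all add: can_pur_nondegenerate)
  have "rep_idx (doubled (II L) + PPs L) = II L" for L
    using PPs_memberD disjoint_members_PPs by (intro rep_idx_doubled_plus) blast+
  then have "II K = II K'"
    using mems by metis
  with cond mems show "cond K = cond K' \<and> II K = II K' \<and> PPs K = PPs K'"
    by simp
qed (use assms in \<open>simp add: can_pur_nondegenerate\<close>)

lemma pure_disjoint_CMI:
  assumes "\<forall>A\<in>#Ts. A \<noteq> {} \<and> A \<inter> C = {}" "disjoint_members Ts" "2 \<le> size Ts"
  shows "\<not> degenerate (CMI C Ts)" "II (CMI C Ts) = {}" "PPs (CMI C Ts) = Ts"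
proof -
  have pur: "pur (CMI C Ts) = CMI C Ts"
    by (simp only: pur_CMI strip_eq_self[OF assms(1)])
  show nondeg: "\<not> degenerate (CMI C Ts)"
    using assms(3) unfolding degenerate_def pur by simp
  have "rep_idx Ts = {}"
    using assms(2) by (simp add: rep_idx_eq_empty_iff)
  then show II: "II (CMI C Ts) = {}"
    unfolding II_def pur by simp
  have "strip {} Ts = Ts"
    using assms(1) by (intro strip_eq_self) blast
  with nondeg II show "PPs (CMI C Ts) = Ts"
    unfolding PPs_def pur by simp
qed

section \<open>Sub-CMIs\<close>

definition TTs :: "cmi \<Rightarrow> cmi \<Rightarrow> nat set multiset" where
  "TTs K K' = strip (II K) (PPs K')"

lemma TTs_memberD: "A \<in># TTs K K' \<Longrightarrow> A \<noteq> {} \<and> A \<inter> cond K' = {}"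
  unfolding TTs_def by (elim strip_memberE) (use PPs_memberD in blast)

lemma disjoint_members_TTs: "disjoint_members (TTs K K')"
  unfolding TTs_def using disjoint_members_PPs by (rule disjoint_members_strip)

lemma RR_eq_Deg: "II K' \<subseteq> II K \<Longrightarrow> size (TTs K K') \<le> 1 \<Longrightarrow> RR K K' = Deg"
  unfolding RR_def TTs_def by simp

lemma RR_eq_TTs:
  "II K' \<subseteq> II K \<Longrightarrow> 2 \<le> size (TTs K K') \<Longrightarrow> RR K K' = CMI (cond K' - II K) (TTs K K')"
  unfolding RR_def TTs_def by simp

lemma RR_repeated_indices:
  assumes "\<not> II K' \<subseteq> II K"
  shows "\<not> degenerate (RR K K') \<and> II (RR K K') \<noteq> {}"
proof -
  define D where "D = II K' - II K"
  define C0 where "C0 = cond K' - II K"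
  have RR: "RR K K' = CMI C0 ({#D, D#} + (if size (TTs K K') \<le> 1 then {#} else TTs K K'))"
    using assms unfolding RR_def TTs_def D_def C0_def Let_def by auto
  have "D \<noteq> {}" "D \<inter> C0 = {}"
    using assms II_Int_cond[of K'] unfolding D_def C0_def by blast+
  then have "{#D, D#} \<subseteq># mems (pur (RR K K'))"
    unfolding RR pur_CMI by (simp add: strip_def Diff_triv)
  moreover obtain x where "x \<in> D"
    using \<open>D \<noteq> {}\<close> by blast
  ultimately have "(x, x) \<in> separations (mems (pur (RR K K')))" "2 \<le> size (mems (pur (RR K K')))"
    by (auto intro: separationsI dest: size_mset_mono)
  then show ?thesis
    unfolding degenerate_def II_def rep_idx_eq two_le_occurrences_iff by auto
qed

lemma sub_cmi_iff:
  assumes "\<not> degenerate K'"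
  shows "sub_cmi K' K \<longleftrightarrow>
    II K' \<subseteq> II K \<and> cond K \<subseteq> cond K' \<and> separations (TTs K K') \<subseteq> separations (PPs K) \<and>
    (2 \<le> size (TTs K K') \<longrightarrow>
      \<Union> (set_mset (TTs K K')) \<subseteq> PP K \<and> cond K' - II K \<subseteq> SS K - \<Union> (set_mset (TTs K K')))"
proof (cases "II K' \<subseteq> II K")
  case False
  with RR_repeated_indices have "can (pur (RR K K')) \<noteq> Deg" "II (RR K K') \<noteq> {}"
    by (auto simp: can_pur_eq_Deg_iff)
  with False assms show ?thesis
    unfolding sub_cmi_def Let_def by simp
next
  case True
  show ?thesis
  proof (cases "2 \<le> size (TTs K K')")
    case False
    then have "RR K K' = Deg" "separations (TTs K K') = {}"
      using True by (simp_all add: RR_eq_Deg separations_eq_empty)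
    with True False assms show ?thesis
      unfolding sub_cmi_def by simp
  next
    case big: True
    let ?C0 = "cond K' - II K"
    have Ts: "\<forall>A\<in>#TTs K K'. A \<noteq> {} \<and> A \<inter> ?C0 = {}"
      using TTs_memberD by blast
    note pure = pure_disjoint_CMI[OF Ts disjoint_members_TTs big]
    have "can (pur (RR K K')) \<noteq> Deg"
      unfolding RR_eq_TTs[OF True big] can_pur_eq_Deg_iff by (rule pure(1))
    moreover have "cond K \<subseteq> ?C0 \<longleftrightarrow> cond K \<subseteq> cond K'"
      using II_Int_cond[of K] by blast
    ultimately show ?thesis
      using True big assms pure(2,3)
      unfolding sub_cmi_def Let_def RR_eq_TTs[OF True big] PP_def separations_subset_iff[symmetric]
      by auto
  qed
qed

lemma TTs_eq_PPs: "II K = II K' \<Longrightarrow> TTs K K' = PPs K'"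
  unfolding TTs_def by (intro strip_eq_self) (use PPs_memberD in simp)

lemma mutual_sub_cmi_iff:
  assumes "\<not> degenerate K" "\<not> degenerate K'"
  shows "sub_cmi K' K \<and> sub_cmi K K' \<longleftrightarrow> cond K = cond K' \<and> II K = II K' \<and> PPs K = PPs K'"
proof
  assume "sub_cmi K' K \<and> sub_cmi K K'"
  then have sub: "sub_cmi K' K" "sub_cmi K K'"
    by simp_all
  have "II K' \<subseteq> II K \<and> cond K \<subseteq> cond K'" "II K \<subseteq> II K' \<and> cond K' \<subseteq> cond K"
    using sub unfolding sub_cmi_iff[OF assms(2)] sub_cmi_iff[OF assms(1)] by simp_all
  then have II: "II K = II K'" and cond: "cond K = cond K'"
    by auto
  have union: "\<Union> (set_mset (PPs L')) \<subseteq> \<Union> (set_mset (PPs L))"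
    if "\<not> degenerate L'" "sub_cmi L' L" "II L = II L'" for L L'
  proof (cases "size (PPs L') = 0")
    case False
    with size_PPs_ne_1[OF that(1)] have "2 \<le> size (PPs L')"
      by linarith
    with that(2) show ?thesis
      unfolding sub_cmi_iff[OF that(1)] TTs_eq_PPs[OF that(3)] PP_def by simp
  qed simp
  have sep: "separations (PPs L') \<subseteq> separations (PPs L)"
    if "\<not> degenerate L'" "sub_cmi L' L" "II L = II L'" for L L'
    using that(2) unfolding sub_cmi_iff[OF that(1)] TTs_eq_PPs[OF that(3)] by simp
  have "PPs K = PPs K'"
  proof (rule disjoint_members_eqI)
    show "\<Union> (set_mset (PPs K)) = \<Union> (set_mset (PPs K'))"
      using union[OF assms(2) sub(1) II] union[OF assms(1) sub(2) II[symmetric]] by (rule equalityI[rotated])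
    show "separations (PPs K) = separations (PPs K')"
      using sep[OF assms(2) sub(1) II] sep[OF assms(1) sub(2) II[symmetric]] by (rule equalityI[rotated])
  qed (simp_all add: disjoint_members_PPs PPs_memberD)
  with II cond show "cond K = cond K' \<and> II K = II K' \<and> PPs K = PPs K'"
    by simp
next
  assume same: "cond K = cond K' \<and> II K = II K' \<and> PPs K = PPs K'"
  have sub: "sub_cmi L' L"
    if "\<not> degenerate L'" "cond L = cond L'" "II L = II L'" "PPs L = PPs L'" for L L'
  proof -
    have "cond L' - II L = cond L'"
      using II_Int_cond[of L'] that(3) by blast
    moreover have "cond L' \<subseteq> SS L - \<Union> (set_mset (PPs L'))"
      using PPs_memberD that(2,4) unfolding SS_def PP_def by blast
    ultimately show ?thesis
      unfolding sub_cmi_iff[OF that(1)] TTs_eq_PPs[OF that(3)] PP_def using that(2-4) by simp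
  qed
  from same show "sub_cmi K' K \<and> sub_cmi K K'"
    using sub[OF assms(2)] sub[OF assms(1)] by simp
qed

lemma not_sub_cmi_degenerate:
  assumes "degenerate K" "\<not> degenerate K'"
  shows "\<not> sub_cmi K' K"
proof
  assume "sub_cmi K' K"
  moreover have "II K = {}" "separations (PPs K) = {}"
    using degenerate_II_PPs[OF assms(1)] separations_eq_empty by auto
  ultimately have "II K' = {}" "separations (TTs K K') = {}"
    unfolding sub_cmi_iff[OF assms(2)] by auto
  with \<open>II K = {}\<close> have "separations (PPs K') = {}"
    by (simp add: TTs_eq_PPs)
  moreover have "separations (PPs K') \<noteq> {}"
    using two_le_size_PPs[OF assms(2) \<open>II K' = {}\<close>] PPs_memberD
    by (intro separations_ne_empty) auto
  ultimately show False
    by simp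
qed

theorem mainTheorem14:
  fixes n :: nat and K K' :: cmi
  assumes "cmi_wf n K" and "cmi_wf n K'"
  shows "can (pur K) = can (pur K') \<longleftrightarrow> sub_cmi K' K \<and> sub_cmi K K'"
proof -
  consider "degenerate K" "degenerate K'" | "degenerate K" "\<not> degenerate K'"
    | "\<not> degenerate K" "degenerate K'" | "\<not> degenerate K" "\<not> degenerate K'"
    by blast
  then show ?thesis
  proof cases
    case 1
    then have "can (pur K) = Deg" "can (pur K') = Deg"
      by (simp_all add: can_pur_eq_Deg_iff)
    with 1 show ?thesis
      unfolding sub_cmi_def by simp
  next
    case 2
    then have "can (pur K) \<noteq> can (pur K')"
      by (metis can_pur_eq_Deg_iff)
    with not_sub_cmi_degenerate[OF 2] show ?thesis
      by simp
  next
    case 3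
    then have "can (pur K) \<noteq> can (pur K')"
      by (metis can_pur_eq_Deg_iff)
    with not_sub_cmi_degenerate[OF 3(2,1)] show ?thesis
      by simp
  next
    case 4
    then show ?thesis
      by (simp add: can_pur_eq_iff mutual_sub_cmi_iff)
  qed
qed

end
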